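(* For $p=(\alpha_1,\dots,\alpha_n)\in\mathbb{C}^n$, let $M_p=(x_1-\alpha_1)A+\dots+(x_n-\alpha_n)A$ and, for $1\le i\le n-2$, let $g_i=t_i(p)\,s_i-s_i(p)\,t_i\in A$. Then $M_p$ is a Poisson ideal of $A$ if and only if one of the following holds: (1) $p$ is a common zero of $s_i$ and $t_i$ for some $i$; (2) $g_1,\dots,g_{n-2}$ are algebraically dependent over $\mathbb{C}$; (3) $p$ is a singular point of the affine variety determined by $g_1,\dots,g_{n-2}$.
   Context: Let $n\ge 3$, $A=\mathbb{C}[x_1,\dots,x_n]$. Fix $s_1,t_1,\dots,s_{n-2},t_{n-2}\in A$ with each $t_i\ne 0$ and $s_i,t_i$ coprime, such that $s_1/t_1,\dots,s_{n-2}/t_{n-2}$ are algebraically independent over $\mathbb{C}$. $A$ carries the Poisson bracket $\{f,g\}=(t_1\cdots t_{n-2})^2\,\mathrm{Jac}(f,g,s_1/t_1,\dots,s_{n-2}/t_{n-2})$ ($\mathrm{Jac}$ = Jacobian determinant with respect to $x_1,\dots,x_n$). An ideal $I$ is a Poisson ideal if $\{I,A\}\subseteq I$. Note $g_i(p)=0$ for all $i$. In (3), the affine variety $\mathcal{V}(g_1,\dots,g_{n-2})$ is the one defined by the ideal generated by $g_1,\dots,g_{n-2}$ (of dimension $2$ when these are algebraically independent), and singularity is in the sense of the general Jacobian criterion for these generators: $p$ is singular iff the $(n-2)\times n$ matrix $\big(\partial g_i/\partial x_j(p)\big)$ has rank less than $n-2$. *)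

theory Defs
  imports "HOL-Library.Poly_Mapping" "HOL-Computational_Algebra.Fraction_Field"
    "Jordan_Normal_Form.DL_Rank"
begin

text \<open>Multivariate polynomials over the complex numbers in the variables x_0, x_1, ...
  (0-based indexing): a polynomial is a finitely supported map from monomials
  (exponent vectors, finitely supported maps nat to nat) to coefficients.
  The ring A = C[x_1..x_n] of the paper is the set of those polynomials
  involving only the variables x_0,...,x_(n-1), see in_A.\<close>

type_synonym mpoly = "(nat \<Rightarrow>\<^sub>0 nat) \<Rightarrow>\<^sub>0 complex"

definition Var :: "nat \<Rightarrow> mpoly" where
  "Var j = Poly_Mapping.single (Poly_Mapping.single j 1) 1"

definition Const :: "complex \<Rightarrow> mpoly" where
  "Const c = Poly_Mapping.single 0 c"

definition in_A :: "nat \<Rightarrow> mpoly \<Rightarrow> bool" where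
  "in_A n f \<longleftrightarrow> (\<forall>m \<in> Poly_Mapping.keys f. Poly_Mapping.keys m \<subseteq> {..<n})"

text \<open>Evaluation of a polynomial with complex coefficients in a commutative ring,
  along a ring map emb from the complex numbers (the C-algebra structure).\<close>
definition eval_gen :: "(complex \<Rightarrow> 'a::comm_ring_1) \<Rightarrow> (nat \<Rightarrow> 'a) \<Rightarrow> mpoly \<Rightarrow> 'a" where
  "eval_gen emb xs f =
     (\<Sum>m \<in> Poly_Mapping.keys f. emb (Poly_Mapping.lookup f m) *
        (\<Prod>j \<in> Poly_Mapping.keys m. xs j ^ Poly_Mapping.lookup m j))"

definition evalp :: "(nat \<Rightarrow> complex) \<Rightarrow> mpoly \<Rightarrow> complex" where
  "evalp p f = eval_gen (\<lambda>c. c) p f"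

definition pd :: "nat \<Rightarrow> mpoly \<Rightarrow> mpoly" where
  "pd j f = (\<Sum>m \<in> Poly_Mapping.keys f.
      Poly_Mapping.single (m - Poly_Mapping.single j 1)
        (of_nat (Poly_Mapping.lookup m j) * Poly_Mapping.lookup f m))"

definition alg_dependent :: "(complex \<Rightarrow> 'a::comm_ring_1) \<Rightarrow> nat \<Rightarrow> (nat \<Rightarrow> 'a) \<Rightarrow> bool" where
  "alg_dependent emb k xs \<longleftrightarrow> (\<exists>P. P \<noteq> 0 \<and> in_A k P \<and> eval_gen emb xs P = 0)"

definition pd_frac :: "nat \<Rightarrow> mpoly \<Rightarrow> mpoly \<Rightarrow> mpoly fract" where
  "pd_frac j s t = Fract (t * pd j s - s * pd j t) (t ^ 2)"

text \<open>The Poisson bracket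
  {f,g} = (t_0 ... t_(n-3))^2 Jac(f, g, s_0/t_0, ..., s_(n-3)/t_(n-3)),
  computed in the fraction field; Jac is the determinant of the n x n matrix whose
  rows are the gradients of f, g, s_0/t_0, ..., s_(n-3)/t_(n-3).\<close>
definition pbracket :: "nat \<Rightarrow> (nat \<Rightarrow> mpoly) \<Rightarrow> (nat \<Rightarrow> mpoly) \<Rightarrow> mpoly \<Rightarrow> mpoly \<Rightarrow> mpoly fract" where
  "pbracket n s t f g =
     to_fract ((\<Prod>i<n-2. t i) ^ 2) *
     det (mat n n (\<lambda>(r, c).
        if r = 0 then to_fract (pd c f)
        else if r = 1 then to_fract (pd c g)
        else pd_frac c (s (r - 2)) (t (r - 2))))"

text \<open>Coprimality (as in the library's coprime: every common divisor is a unit);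
  the library constant needs algebraic_semidom, which is not instantiated here.\<close>
definition coprime_p :: "mpoly \<Rightarrow> mpoly \<Rightarrow> bool" where
  "coprime_p a b \<longleftrightarrow> (\<forall>c. c dvd a \<longrightarrow> c dvd b \<longrightarrow> c dvd 1)"

definition ideal_A :: "nat \<Rightarrow> mpoly set \<Rightarrow> bool" where
  "ideal_A n I \<longleftrightarrow> I \<subseteq> {f. in_A n f} \<and> 0 \<in> I \<and>
     (\<forall>f\<in>I. \<forall>g\<in>I. f + g \<in> I) \<and> (\<forall>f\<in>I. \<forall>h. in_A n h \<longrightarrow> h * f \<in> I)"

definition poisson_ideal :: "nat \<Rightarrow> (nat \<Rightarrow> mpoly) \<Rightarrow> (nat \<Rightarrow> mpoly) \<Rightarrow> mpoly set \<Rightarrow> bool" where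
  "poisson_ideal n s t I \<longleftrightarrow> ideal_A n I \<and>
     (\<forall>f\<in>I. \<forall>g. in_A n g \<longrightarrow> (\<exists>h\<in>I. pbracket n s t f g = to_fract h))"

definition Mp :: "nat \<Rightarrow> (nat \<Rightarrow> complex) \<Rightarrow> mpoly set" where
  "Mp n p = {(\<Sum>j<n. (Var j - Const (p j)) * h j) | h. \<forall>j<n. in_A n (h j)}"

end

theory Submission
  imports Defs
begin

text \<open>Clearing the denominators t_i^2 row by row turns the bracket {f,g} into the determinant
  of a polynomial matrix with rows \<nabla>f, \<nabla>g and t_i\<nabla>s_i - s_i\<nabla>t_i; at p the last n-2 rows are
  the gradients \<nabla>g_i(p). Since M_p is the kernel of evaluation at p, it is a Poisson ideal
  iff {f,g}(p) = 0 for all f \<in> M_p and g \<in> A. Taking f = x_i - p_i and g = x_j, this says that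
  every determinant obtained by bordering the Jacobian of g_1,...,g_(n-2) at p with two unit rows
  vanishes, i.e. that the Jacobian has rank < n-2: condition (3).
  Conditions (1) and (2) imply (3). Under (1) some g_i is zero. Under (2), differentiating a
  relation P(g) = 0 of minimal degree gives a linear relation between the gradients \<nabla>g_i with
  polynomial coefficients \<partial>P/\<partial>y_k(g), not all zero by minimality.\<close>

section \<open>Bordered matrices\<close>

definition border_mat :: "nat \<Rightarrow> 'a mat \<Rightarrow> (nat \<Rightarrow> 'a) \<Rightarrow> (nat \<Rightarrow> 'a) \<Rightarrow> 'a mat" where
  "border_mat n J a b = mat n n (\<lambda>(r,c). if r = 0 then a c else if r = 1 then b c else J $$ (r-2, c))"

lemma border_mat_carrier: "border_mat n J a b \<in> carrier_mat n n"
  unfolding border_mat_def by simp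

lemma rank_full_if_border_det_nonzero:
  fixes J :: "'a::field mat"
  assumes J: "J \<in> carrier_mat m n" and nm: "n = m + 2"
    and d: "det (border_mat n J a b) \<noteq> 0"
  shows "vec_space.rank m J = m"
proof -
  define W where "W = border_mat n J a b"
  have W: "W \<in> carrier_mat n n" unfolding W_def by (rule border_mat_carrier)
  interpret vec_space "TYPE('a)" m .
  have "carrier_vec m \<subseteq> span (set (cols J))"
  proof
    fix z :: "'a vec" assume z: "z \<in> carrier_vec m"
    \<comment> \<open>solve W x = (0, 0, z) with the adjugate; the last m equations say J x = z\<close>
    define y where "y = vec n (\<lambda>r. if r < 2 then 0 else z $ (r-2))"
    define x where "x = (1 / det W) \<cdot>\<^sub>v (adj_mat W *\<^sub>v y)"
    have y: "y \<in> carrier_vec n" unfolding y_def by auto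
    have adj: "adj_mat W \<in> carrier_mat n n" "W * adj_mat W = det W \<cdot>\<^sub>m 1\<^sub>m n"
      using adj_mat[OF W] by auto
    have x: "x \<in> carrier_vec n" unfolding x_def using adj y by auto
    have "W *\<^sub>v x = (1 / det W) \<cdot>\<^sub>v ((W * adj_mat W) *\<^sub>v y)"
      unfolding x_def using mult_mat_vec[OF W] assoc_mult_mat_vec[OF W adj(1) y] adj y by auto
    also have "(W * adj_mat W) *\<^sub>v y = det W \<cdot>\<^sub>v y"
      unfolding adj(2) using y by (intro eq_vecI) (auto simp: scalar_prod_def if_distrib if_distribR cong: if_cong)
    finally have Wx: "W *\<^sub>v x = y" using d unfolding W_def[symmetric] by auto
    have "J *\<^sub>v x = z"
    proof (rule eq_vecI)
      fix k assume "k < dim_vec z"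
      hence km: "k < m" using z by auto
      have "(J *\<^sub>v x) $ k = (W *\<^sub>v x) $ (k+2)"
        using km J nm W x unfolding W_def border_mat_def by (auto simp: scalar_prod_def row_def)
      also have "\<dots> = z $ k" using km nm unfolding Wx y_def by auto
      finally show "(J *\<^sub>v x) $ k = z $ k" .
    qed (use J z in auto)
    then show "z \<in> span (set (cols J))"
      using col_space_eq[OF J] x J unfolding col_space_def by auto
  qed
  then have span: "span (set (cols J)) = carrier_vec m"
    using J cols_dim span_is_subset2 by (metis carrier_matD(1) subset_antisym)
  have V: "V\<lparr>carrier := carrier_vec m\<rparr> = V" by (simp add: module_vec_def)
  show ?thesis unfolding rank_def span V using dim_is_n by simp
qed

lemma full_rank_obtains_independent_columns:
  fixes J :: "'a::field mat"
  assumes J: "J \<in> carrier_mat m n" and r: "\<not> vec_space.rank m J < m"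
  obtains K where "K \<subseteq> {0..<n}" "card K = m"
    "\<And>v. v \<in> carrier_vec n \<Longrightarrow> J *\<^sub>v v = 0\<^sub>v m \<Longrightarrow> (\<And>c. c < n \<Longrightarrow> c \<notin> K \<Longrightarrow> v $ c = 0) \<Longrightarrow> v = 0\<^sub>v n"
proof -
  interpret vec_space "TYPE('a)" m .
  obtain S where maxS: "maximal S (\<lambda>T. T \<subseteq> set (cols J) \<and> lin_indpt T)"
    using maximal_exists[of "\<lambda>T. T \<subseteq> set (cols J) \<and> lin_indpt T" "card (set (cols J))" "{}"]
    by (meson List.finite_set card_mono empty_iff empty_subsetI finite_lin_indpt2 rev_finite_subset)
  have SJ: "S \<subseteq> set (cols J)" and liS: "lin_indpt S" using maxS unfolding maximal_def by auto
  have "m \<le> card S" using r rank_card_indpt[OF J maxS] by auto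
  then obtain S' where S': "S' \<subseteq> S" "card S' = m" "finite S'" by (rule obtain_subset_with_card_n)
  have liS': "lin_indpt S'" using subset_li_is_li[OF liS S'(1)] .
  have S'c: "S' \<subseteq> carrier_vec m" using S' SJ J cols_dim by (metis carrier_matD(1) subset_trans)
  define idx where "idx w = (SOME c. c < n \<and> col J c = w)" for w
  have idx: "idx w < n \<and> col J (idx w) = w" if "w \<in> S'" for w
  proof -
    have "\<exists>c. c < n \<and> col J c = w" using that S' SJ J by (force simp: cols_def)
    then show ?thesis unfolding idx_def by (rule someI_ex)
  qed
  have inj: "inj_on idx S'" by (metis idx inj_onI)
  show thesis
  proof
    show "idx ` S' \<subseteq> {0..<n}" "card (idx ` S') = m" using idx card_image[OF inj] S' by auto
  next
    fix v assume v: "v \<in> carrier_vec n" and Jv: "J *\<^sub>v v = 0\<^sub>v m"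
      and vK: "\<And>c. c < n \<Longrightarrow> c \<notin> idx ` S' \<Longrightarrow> v $ c = 0"
    have "lincomb (\<lambda>w. v $ idx w) S' = 0\<^sub>v m"
    proof (rule eq_vecI)
      fix k assume "k < dim_vec (0\<^sub>v m)"
      hence k: "k < m" by auto
      have "lincomb (\<lambda>w. v $ idx w) S' $ k = (\<Sum>w\<in>S'. v $ idx w * col J (idx w) $ k)"
        using lincomb_index[OF k S'c] idx by (auto intro: sum.cong)
      also have "\<dots> = (\<Sum>c\<in>idx ` S'. v $ c * col J c $ k)"
        by (rule sum.reindex[OF inj, symmetric, unfolded o_def])
      also have "\<dots> = (\<Sum>c\<in>{0..<n}. v $ c * col J c $ k)"
        by (rule sum.mono_neutral_left) (use idx vK in auto)
      also have "\<dots> = (J *\<^sub>v v) $ k"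
        using J k v by (auto simp: scalar_prod_def row_def intro: sum.cong)
      finally show "lincomb (\<lambda>w. v $ idx w) S' $ k = 0\<^sub>v m $ k" using Jv k by auto
    qed (use lincomb_closed[OF S'c] in auto)
    from not_lindepD[OF liS' S'(3) order_refl _ this]
    have "v $ idx w = 0" if "w \<in> S'" for w using that by auto
    then show "v = 0\<^sub>v n" using v vK by (intro eq_vecI) auto
  qed
qed

lemma border_det_nonzero_if_rank_full:
  fixes J :: "'a::field mat"
  assumes J: "J \<in> carrier_mat m n" and nm: "n = m + 2"
    and r: "\<not> vec_space.rank m J < m"
  obtains i j where "i < n" "j < n"
    "det (border_mat n J (\<lambda>c. of_bool (c = i)) (\<lambda>c. of_bool (c = j))) \<noteq> 0"
proof -
  obtain K where K: "K \<subseteq> {0..<n}" "card K = m"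
    and indep: "\<And>v. v \<in> carrier_vec n \<Longrightarrow> J *\<^sub>v v = 0\<^sub>v m \<Longrightarrow>
      (\<And>c. c < n \<Longrightarrow> c \<notin> K \<Longrightarrow> v $ c = 0) \<Longrightarrow> v = 0\<^sub>v n"
    using full_rank_obtains_independent_columns[OF J r] by blast
  have "card ({0..<n} - K) = 2" using card_Diff_subset[OF _ K(1)] K nm
    by (simp add: finite_subset)
  then obtain i j where ij: "{0..<n} - K = {i, j}" by (auto simp: card_2_iff)
  then have "i < n" "j < n" by auto
  define W where "W = border_mat n J (\<lambda>c. of_bool (c = i)) (\<lambda>c. of_bool (c = j))"
  have W: "W \<in> carrier_mat n n" unfolding W_def by (rule border_mat_carrier)
  have "det W \<noteq> 0"
  proof
    assume "det W = 0"
    then obtain v where v: "v \<in> carrier_vec n" "v \<noteq> 0\<^sub>v n" "W *\<^sub>v v = 0\<^sub>v n"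
      using det_0_iff_vec_prod_zero_field[OF W] by auto
    have Wv: "(\<Sum>c = 0..<n. W $$ (r, c) * v $ c) = 0" if "r < n" for r
    proof -
      have "(W *\<^sub>v v) $ r = (\<Sum>c = 0..<n. W $$ (r, c) * v $ c)"
        using that W v(1) by (auto simp: scalar_prod_def row_def)
      then show ?thesis using v(3) that by simp
    qed
    have "(\<Sum>c = 0..<n. W $$ (0, c) * v $ c) = (\<Sum>c = 0..<n. of_bool (c = i) * v $ c)"
      "(\<Sum>c = 0..<n. W $$ (1, c) * v $ c) = (\<Sum>c = 0..<n. of_bool (c = j) * v $ c)"
      using nm unfolding W_def border_mat_def by (auto intro: sum.cong)
    moreover have "1 < n" using nm by simp
    ultimately have "v $ i = 0" "v $ j = 0" using Wv[of 0] Wv[of 1] \<open>i < n\<close> \<open>j < n\<close> by simp_all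
    then have vK: "v $ c = 0" if "c < n" "c \<notin> K" for c using that ij by auto
    have "J *\<^sub>v v = 0\<^sub>v m"
    proof (rule eq_vecI)
      fix k assume "k < dim_vec (0\<^sub>v m)"
      then have k: "k < m" by simp
      show "(J *\<^sub>v v) $ k = 0\<^sub>v m $ k"
        using Wv[of "k+2"] k nm J v unfolding W_def border_mat_def by (auto simp: scalar_prod_def row_def)
    qed (use J in simp)
    then show False using indep[OF v(1) _ vK] v(2) by blast
  qed
  then show thesis using that \<open>i < n\<close> \<open>j < n\<close> unfolding W_def by blast
qed

lemma rank_less_iff_unit_border_dets_zero:
  fixes J :: "'a::field mat"
  assumes J: "J \<in> carrier_mat m n" and nm: "n = m + 2"
  shows "vec_space.rank m J < m \<longleftrightarrow>
    (\<forall>i<n. \<forall>j<n. det (border_mat n J (\<lambda>c. of_bool (c = i)) (\<lambda>c. of_bool (c = j))) = 0)"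
  using rank_full_if_border_det_nonzero[OF J nm] border_det_nonzero_if_rank_full[OF J nm]
  by (metis less_irrefl)

section \<open>Polynomials as finitely supported maps\<close>

lemma poly_mapping_sum_single:
  "(f::'a \<Rightarrow>\<^sub>0 'b::comm_monoid_add) =
     (\<Sum>m\<in>Poly_Mapping.keys f. Poly_Mapping.single m (Poly_Mapping.lookup f m))"
proof (rule poly_mapping_eqI)
  fix k
  show "Poly_Mapping.lookup f k = Poly_Mapping.lookup
     (\<Sum>m\<in>Poly_Mapping.keys f. Poly_Mapping.single m (Poly_Mapping.lookup f m)) k"
    unfolding lookup_sum lookup_single when_def
    by (cases "k \<in> Poly_Mapping.keys f") (auto simp: in_keys_iff)
qed

lemma poly_mapping_induct_add [case_names zero add_single]:
  fixes f :: "'a \<Rightarrow>\<^sub>0 'b::comm_monoid_add"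
  assumes "P 0" "\<And>f a b. P f \<Longrightarrow> P (f + Poly_Mapping.single a b)"
  shows "P f"
proof (induction f rule: update_induct)
  case const then show ?case using assms(1) .
next
  case (update f a b)
  then have "Poly_Mapping.update a b f = f + Poly_Mapping.single a b"
    by (intro poly_mapping_eqI) (auto simp: lookup_update lookup_add lookup_single when_def in_keys_iff)
  then show ?case using assms(2) update by metis
qed

lemma Const_add: "Const (a + b) = Const a + Const b" by (simp add: Const_def single_add)
lemma Const_mult: "Const (a * b) = Const a * Const b" by (simp add: Const_def mult_single)

lemma Const_hom: "comm_ring_hom Const"
  by unfold_locales (auto simp: Const_add Const_mult Const_def[of 0] Const_def[of 1])

interpretation Const: comm_ring_hom Const by (rule Const_hom)

lemma Const_inject: "Const a = Const b \<longleftrightarrow> a = b"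
  by (metis Const_def lookup_single_eq)

lemma Var_power: "Var i ^ e = Poly_Mapping.single (Poly_Mapping.single i e) 1"
  by (induction e) (simp_all add: Var_def mult_single single_add[symmetric])

lemma single_eq_Const_mult_Var_prod: "Poly_Mapping.single m c =
   Const c * (\<Prod>i\<in>Poly_Mapping.keys m. Var i ^ Poly_Mapping.lookup m i)"
proof -
  have "(\<Prod>i\<in>K. Poly_Mapping.single (g i) (1::complex)) = Poly_Mapping.single (\<Sum>i\<in>K. g i) 1"
    if "finite K" for K and g :: "nat \<Rightarrow> nat \<Rightarrow>\<^sub>0 nat"
    using that by (induction K rule: finite_induct) (auto simp: mult_single)
  then have "(\<Prod>i\<in>Poly_Mapping.keys m. Var i ^ Poly_Mapping.lookup m i) =
     Poly_Mapping.single (\<Sum>i\<in>Poly_Mapping.keys m. Poly_Mapping.single i (Poly_Mapping.lookup m i)) 1"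
    unfolding Var_power by simp
  also have "\<dots> = Poly_Mapping.single m 1" using poly_mapping_sum_single[of m] by simp
  finally show ?thesis by (simp add: Const_def mult_single)
qed

definition eval_monom :: "(nat \<Rightarrow> 'a::comm_ring_1) \<Rightarrow> (nat \<Rightarrow>\<^sub>0 nat) \<Rightarrow> 'a" where
  "eval_monom xs m = (\<Prod>j\<in>Poly_Mapping.keys m. xs j ^ Poly_Mapping.lookup m j)"

lemma eval_monom_superset:
  assumes "finite T" "Poly_Mapping.keys m \<subseteq> T"
  shows "eval_monom xs m = (\<Prod>j\<in>T. xs j ^ Poly_Mapping.lookup m j)"
  unfolding eval_monom_def by (rule prod.mono_neutral_left) (use assms in \<open>auto simp: in_keys_iff\<close>)

lemma eval_monom_add: "eval_monom xs (a + b) = eval_monom xs a * eval_monom xs b"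
proof -
  let ?T = "Poly_Mapping.keys a \<union> Poly_Mapping.keys b"
  have "eval_monom xs (a + b) = (\<Prod>j\<in>?T. xs j ^ Poly_Mapping.lookup (a + b) j)"
    by (rule eval_monom_superset) (auto dest: subsetD[OF keys_add])
  also have "\<dots> = (\<Prod>j\<in>?T. xs j ^ Poly_Mapping.lookup a j) * (\<Prod>j\<in>?T. xs j ^ Poly_Mapping.lookup b j)"
    by (simp add: lookup_add power_add prod.distrib)
  also have "\<dots> = eval_monom xs a * eval_monom xs b"
    by (subst (1 2) eval_monom_superset[of ?T]) auto
  finally show ?thesis .
qed

context
  fixes emb :: "complex \<Rightarrow> 'a::comm_ring_1"
  assumes emb: "comm_ring_hom emb"
begin

interpretation emb: comm_ring_hom emb by (rule emb)

lemma eval_gen_superset: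
  assumes "finite S" "Poly_Mapping.keys f \<subseteq> S"
  shows "eval_gen emb xs f = (\<Sum>m\<in>S. emb (Poly_Mapping.lookup f m) * eval_monom xs m)"
  unfolding eval_gen_def eval_monom_def[symmetric]
  by (rule sum.mono_neutral_left) (use assms in \<open>auto simp: in_keys_iff\<close>)

lemma eval_gen_add: "eval_gen emb xs (f + g) = eval_gen emb xs f + eval_gen emb xs g"
proof -
  let ?S = "Poly_Mapping.keys f \<union> Poly_Mapping.keys g"
  have "eval_gen emb xs (f + g) = (\<Sum>m\<in>?S. emb (Poly_Mapping.lookup (f + g) m) * eval_monom xs m)"
    by (rule eval_gen_superset) (auto dest: subsetD[OF keys_add])
  also have "\<dots> = (\<Sum>m\<in>?S. emb (Poly_Mapping.lookup f m) * eval_monom xs m) +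
      (\<Sum>m\<in>?S. emb (Poly_Mapping.lookup g m) * eval_monom xs m)"
    by (simp add: lookup_add emb.hom_add distrib_right sum.distrib)
  also have "\<dots> = eval_gen emb xs f + eval_gen emb xs g"
    by (subst (1 2) eval_gen_superset[of ?S]) auto
  finally show ?thesis .
qed

lemma eval_gen_single: "eval_gen emb xs (Poly_Mapping.single m c) = emb c * eval_monom xs m"
  by (cases "c = 0") (auto simp: eval_gen_def eval_monom_def)

lemma eval_gen_mult: "eval_gen emb xs (f * g) = eval_gen emb xs f * eval_gen emb xs g"
proof (induction f rule: poly_mapping_induct_add)
  case zero then show ?case by (simp add: eval_gen_def)
next
  case (add_single f a b)
  have "eval_gen emb xs (Poly_Mapping.single a b * g) =
      eval_gen emb xs (Poly_Mapping.single a b) * eval_gen emb xs g"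
  proof (induction g rule: poly_mapping_induct_add)
    case zero then show ?case by (simp add: eval_gen_def)
  next
    case (add_single g c d)
    then show ?case
      by (simp add: distrib_left eval_gen_add mult_single eval_gen_single emb.hom_mult
          eval_monom_add ac_simps)
  qed
  with add_single show ?case by (simp add: distrib_right eval_gen_add)
qed

lemma eval_gen_hom: "comm_ring_hom (eval_gen emb xs)"
proof
  show "eval_gen emb xs 1 = 1"
    using eval_gen_single[of xs 0 1] by (simp add: eval_monom_def)
qed (simp_all add: eval_gen_add eval_gen_mult eval_gen_def[of _ _ 0])

lemma eval_gen_Const [simp]: "eval_gen emb xs (Const c) = emb c"
  by (simp add: Const_def eval_gen_single eval_monom_def)

lemma eval_gen_Var [simp]: "eval_gen emb xs (Var j) = xs j"
  by (simp add: Var_def eval_gen_single eval_monom_def)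

end

interpretation evalp: comm_ring_hom "evalp p" for p
  unfolding evalp_def[abs_def] by (rule eval_gen_hom) (unfold_locales; simp)

lemma evalp_Const [simp]: "evalp p (Const c) = c"
  unfolding evalp_def by (rule eval_gen_Const) (unfold_locales; simp)

lemma evalp_Var [simp]: "evalp p (Var j) = p j"
  unfolding evalp_def by (rule eval_gen_Var) (unfold_locales; simp)

interpretation eval_Const: comm_ring_hom "eval_gen Const xs" for xs
  by (rule eval_gen_hom[OF Const_hom])

abbreviation var_exp :: "nat \<Rightarrow> nat \<Rightarrow>\<^sub>0 nat" where
  "var_exp j \<equiv> Poly_Mapping.single j 1"

lemma pd_superset:
  assumes "finite S" "Poly_Mapping.keys f \<subseteq> S"
  shows "pd j f = (\<Sum>m\<in>S. Poly_Mapping.single (m - var_exp j)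
      (of_nat (Poly_Mapping.lookup m j) * Poly_Mapping.lookup f m))"
  unfolding pd_def by (rule sum.mono_neutral_left) (use assms in \<open>auto simp: in_keys_iff\<close>)

lemma pd_add: "pd j (f + g) = pd j f + pd j g"
proof -
  let ?S = "Poly_Mapping.keys f \<union> Poly_Mapping.keys g"
  let ?d = "\<lambda>h m. Poly_Mapping.single (m - var_exp j) (of_nat (Poly_Mapping.lookup m j) * h)"
  have "pd j (f + g) = (\<Sum>m\<in>?S. ?d (Poly_Mapping.lookup (f + g) m) m)"
    by (rule pd_superset) (auto dest: subsetD[OF keys_add])
  also have "\<dots> = (\<Sum>m\<in>?S. ?d (Poly_Mapping.lookup f m) m) + (\<Sum>m\<in>?S. ?d (Poly_Mapping.lookup g m) m)"
    by (simp add: lookup_add distrib_left single_add sum.distrib)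
  also have "\<dots> = pd j f + pd j g"
    by (subst (1 2) pd_superset[of ?S]) auto
  finally show ?thesis .
qed

interpretation pd: ab_group_add_hom "pd j" for j
  by unfold_locales (simp_all add: pd_add pd_def[of _ 0])

lemma pd_single: "pd j (Poly_Mapping.single m c) =
   Poly_Mapping.single (m - var_exp j) (of_nat (Poly_Mapping.lookup m j) * c)"
  by (cases "c = 0") (auto simp: pd_def)

lemma pd_mult_single_single:
  "pd j (Poly_Mapping.single a b * Poly_Mapping.single c d) =
   pd j (Poly_Mapping.single a b) * Poly_Mapping.single c d +
   Poly_Mapping.single a b * pd j (Poly_Mapping.single c d)"
proof -
  have minus_add: "x - var_exp j + y = x + y - var_exp j" if "Poly_Mapping.lookup x j \<noteq> 0" for x y
    by (rule poly_mapping_eqI) (use that in \<open>auto simp: lookup_add lookup_minus lookup_single when_def\<close>)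
  have 1: "Poly_Mapping.single (a - var_exp j + c) (of_nat (Poly_Mapping.lookup a j) * b * d) =
     Poly_Mapping.single (a + c - var_exp j) (of_nat (Poly_Mapping.lookup a j) * b * d)"
    by (cases "Poly_Mapping.lookup a j = 0") (simp, subst minus_add, simp_all)
  have 2: "Poly_Mapping.single (a + (c - var_exp j)) (b * (of_nat (Poly_Mapping.lookup c j) * d)) =
     Poly_Mapping.single (a + c - var_exp j) (of_nat (Poly_Mapping.lookup c j) * b * d)"
    by (cases "Poly_Mapping.lookup c j = 0")
      (simp, subst add.commute, subst minus_add, simp_all add: ac_simps)
  have 3: "(of_nat (Poly_Mapping.lookup (a + c) j) :: complex) * (b * d) =
     of_nat (Poly_Mapping.lookup a j) * b * d + of_nat (Poly_Mapping.lookup c j) * b * d"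
    by (simp add: lookup_add algebra_simps)
  show ?thesis unfolding pd_single mult_single 1 2 3 single_add ..
qed

lemma pd_mult: "pd j (f * g) = pd j f * g + f * pd j g"
proof (induction f rule: poly_mapping_induct_add)
  case zero then show ?case by simp
next
  case (add_single f a b)
  have "pd j (Poly_Mapping.single a b * g) =
      pd j (Poly_Mapping.single a b) * g + Poly_Mapping.single a b * pd j g"
    by (induction g rule: poly_mapping_induct_add) (simp_all add: distrib_left pd.hom_add pd_mult_single_single)
  with add_single show ?case by (simp add: distrib_right pd.hom_add)
qed

lemma pd_Const [simp]: "pd j (Const c) = 0"
  by (simp add: Const_def pd_single)

lemma pd_Var: "pd j (Var i) = of_bool (j = i)"
  by (auto simp: Var_def pd_single lookup_single when_def)

lemma pd_Const_mult: "pd j (Const c * f) = Const c * pd j f"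
  by (simp add: pd_mult)

lemma in_A_0 [simp]: "in_A n 0" by (simp add: in_A_def)
lemma in_A_1 [simp]: "in_A n 1" by (simp add: in_A_def)
lemma in_A_Const [simp]: "in_A n (Const c)" by (simp add: in_A_def Const_def)
lemma in_A_Var: "j < n \<Longrightarrow> in_A n (Var j)" by (simp add: in_A_def Var_def)

lemma in_A_add: "in_A n f \<Longrightarrow> in_A n g \<Longrightarrow> in_A n (f + g)"
  unfolding in_A_def using keys_add by fastforce

lemma in_A_mult:
  assumes "in_A n f" "in_A n g"
  shows "in_A n (f * g)"
  unfolding in_A_def
proof
  fix m assume "m \<in> Poly_Mapping.keys (f * g)"
  then obtain a b where ab: "a \<in> Poly_Mapping.keys f" "b \<in> Poly_Mapping.keys g" "m = a + b"
    using keys_mult[of f g] by auto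
  have "Poly_Mapping.keys m \<subseteq> Poly_Mapping.keys a \<union> Poly_Mapping.keys b"
    unfolding ab(3) by (rule keys_add)
  also have "\<dots> \<subseteq> {..<n}" using ab assms unfolding in_A_def by auto
  finally show "Poly_Mapping.keys m \<subseteq> {..<n}" .
qed

lemma in_A_diff: "in_A n f \<Longrightarrow> in_A n g \<Longrightarrow> in_A n (f - g)"
  using in_A_add[of n f "- g"] by (simp add: in_A_def in_keys_iff)

lemma in_A_sum: "(\<And>x. x \<in> S \<Longrightarrow> in_A n (h x)) \<Longrightarrow> in_A n (sum h S)"
  by (induction S rule: infinite_finite_induct) (auto intro: in_A_add)

lemma in_A_prod: "(\<And>x. x \<in> S \<Longrightarrow> in_A n (h x)) \<Longrightarrow> in_A n (prod h S)"
  by (induction S rule: infinite_finite_induct) (auto intro: in_A_mult)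

lemma in_A_of_int: "in_A n (of_int k)"
  using in_A_Const[of n "of_int k"] by (simp add: Const_def)

lemma in_A_pd: "in_A n f \<Longrightarrow> in_A n (pd j f)"
  unfolding pd_def
proof (rule in_A_sum)
  fix m assume "in_A n f" "m \<in> Poly_Mapping.keys f"
  then have "Poly_Mapping.keys m \<subseteq> {..<n}" by (auto simp: in_A_def)
  moreover have "Poly_Mapping.keys (m - var_exp j) \<subseteq> Poly_Mapping.keys m"
    by (auto simp: in_keys_iff lookup_minus)
  ultimately show "in_A n (Poly_Mapping.single (m - var_exp j)
      (of_nat (Poly_Mapping.lookup m j) * Poly_Mapping.lookup f m))"
    by (auto simp: in_A_def)
qed

lemma in_A_det:
  assumes "M \<in> carrier_mat k k" "\<And>i j. i < k \<Longrightarrow> j < k \<Longrightarrow> in_A n (M $$ (i, j))"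
  shows "in_A n (det M)"
  unfolding det_def'[OF assms(1)]
  by (intro in_A_sum in_A_mult in_A_of_int in_A_prod) (use assms permutes_in_image in auto)


lemma in_A_induct [consumes 1, case_names Const Var add mult]:
  assumes f: "in_A n f" and Const: "\<And>c. P (Const c)" and Var: "\<And>i. i < n \<Longrightarrow> P (Var i)"
    and add: "\<And>f g. in_A n f \<Longrightarrow> in_A n g \<Longrightarrow> P f \<Longrightarrow> P g \<Longrightarrow> P (f + g)"
    and mult: "\<And>f g. in_A n f \<Longrightarrow> in_A n g \<Longrightarrow> P f \<Longrightarrow> P g \<Longrightarrow> P (f * g)"
  shows "P f"
proof -
  let ?Q = "\<lambda>f. in_A n f \<and> P f"
  have sum: "?Q (sum h S)" if "\<forall>x\<in>S. ?Q (h x)" for S and h :: "'b \<Rightarrow> mpoly"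
    using that by (induction S rule: infinite_finite_induct)
      (auto intro: in_A_add add simp: Const[of 0, simplified])
  have prod: "?Q (prod h S)" if "\<forall>x\<in>S. ?Q (h x)" for S and h :: "'b \<Rightarrow> mpoly"
    using that by (induction S rule: infinite_finite_induct)
      (auto intro: in_A_mult mult simp: Const[of 1, simplified])
  have power: "?Q (g ^ e)" if "?Q g" for g e
    using that by (induction e) (auto intro: in_A_mult mult simp: Const[of 1, simplified])
  have single: "?Q (Poly_Mapping.single m c)" if "Poly_Mapping.keys m \<subseteq> {..<n}" for m c
  proof -
    have "?Q (\<Prod>i\<in>Poly_Mapping.keys m. Var i ^ Poly_Mapping.lookup m i)"
      using that by (intro prod ballI power) (auto simp: in_A_Var Var)
    then show ?thesis
      unfolding single_eq_Const_mult_Var_prod[of m] by (auto intro: in_A_mult mult Const)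
  qed
  have "?Q (\<Sum>m\<in>Poly_Mapping.keys f. Poly_Mapping.single m (Poly_Mapping.lookup f m))"
    using f single by (intro sum) (auto simp: in_A_def)
  then show ?thesis using poly_mapping_sum_single[of f] by simp
qed

lemma Mp_in_A: "f \<in> Mp n p \<Longrightarrow> in_A n f"
  unfolding Mp_def by (auto intro!: in_A_sum in_A_mult in_A_diff in_A_Var)

lemma Mp_ideal: "ideal_A n (Mp n p)"
  unfolding ideal_A_def
proof (intro conjI ballI allI impI subsetI CollectI)
  show "0 \<in> Mp n p" unfolding Mp_def by (rule CollectI, rule exI[of _ "\<lambda>_. 0"]) auto
next
  fix f g assume "f \<in> Mp n p" "g \<in> Mp n p"
  then obtain h k where "f = (\<Sum>j<n. (Var j - Const (p j)) * h j)" "\<forall>j<n. in_A n (h j)"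
    and "g = (\<Sum>j<n. (Var j - Const (p j)) * k j)" "\<forall>j<n. in_A n (k j)"
    unfolding Mp_def by auto
  then show "f + g \<in> Mp n p" unfolding Mp_def
    by (intro CollectI exI[of _ "\<lambda>j. h j + k j"]) (simp add: distrib_left sum.distrib in_A_add)
next
  fix f g assume "f \<in> Mp n p" "in_A n g"
  then obtain h where "f = (\<Sum>j<n. (Var j - Const (p j)) * h j)" "\<forall>j<n. in_A n (h j)"
    unfolding Mp_def by auto
  with \<open>in_A n g\<close> show "g * f \<in> Mp n p" unfolding Mp_def
    by (intro CollectI exI[of _ "\<lambda>j. g * h j"]) (simp add: sum_distrib_left ac_simps in_A_mult)
qed (rule Mp_in_A)

lemma Var_minus_Const_in_Mp: "i < n \<Longrightarrow> Var i - Const (p i) \<in> Mp n p"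
  unfolding Mp_def
  by (intro CollectI exI[of _ "\<lambda>j. of_bool (j = i)"]) (simp add: of_bool_def if_distrib cong: if_cong)

lemma Mp_eq_kernel: "in_A n f \<Longrightarrow> f \<in> Mp n p \<longleftrightarrow> evalp p f = 0"
proof
  show "f \<in> Mp n p \<Longrightarrow> evalp p f = 0"
    unfolding Mp_def by (auto simp: evalp.hom_sum evalp.hom_mult evalp.hom_minus)
next
  have add_closed: "f + g \<in> Mp n p" if "f \<in> Mp n p" "g \<in> Mp n p" for f g
    using Mp_ideal that unfolding ideal_A_def by blast
  have mult_closed: "g * f \<in> Mp n p" if "f \<in> Mp n p" "in_A n g" for f g
    using Mp_ideal that unfolding ideal_A_def by blast
  assume "in_A n f"
  then have "f - Const (evalp p f) \<in> Mp n p"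
  proof (induction rule: in_A_induct)
    case (add f g)
    have "f + g - Const (evalp p (f + g)) = (f - Const (evalp p f)) + (g - Const (evalp p g))"
      by (simp add: evalp.hom_add Const.hom_add)
    with add show ?case using add_closed by metis
  next
    case (mult f g)
    have "f * g - Const (evalp p (f * g)) =
        g * (f - Const (evalp p f)) + Const (evalp p f) * (g - Const (evalp p g))"
      by (simp add: evalp.hom_mult Const.hom_mult algebra_simps)
    with mult show ?case using add_closed mult_closed by (metis in_A_Const)
  qed (use Mp_ideal Var_minus_Const_in_Mp in \<open>auto simp: ideal_A_def\<close>)
  then show "evalp p f = 0 \<Longrightarrow> f \<in> Mp n p" by simp
qed

section \<open>Algebraic dependence and Jacobians\<close>

lemma pd_eval_gen_Const:
  assumes "in_A m P"
  shows "pd j (eval_gen Const xs P) = (\<Sum>k<m. eval_gen Const xs (pd k P) * pd j (xs k))"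
  using assms
proof (induction rule: in_A_induct)
  case (Const c) then show ?case by (simp add: eval_gen_Const[OF Const_hom])
next
  case (Var i)
  have "(\<Sum>k<m. eval_gen Const xs (pd k (Var i)) * pd j (xs k)) = (\<Sum>k<m. of_bool (k = i) * pd j (xs k))"
    by (intro sum.cong) (auto simp: pd_Var)
  with Var show ?case by (simp add: eval_gen_Var[OF Const_hom])
next
  case (add f g)
  then show ?case by (simp add: eval_Const.hom_add pd.hom_add sum.distrib distrib_right)
next
  case (mult f g)
  let ?e = "eval_gen Const xs"
  have "pd j (?e (f * g)) = pd j (?e f) * ?e g + ?e f * pd j (?e g)"
    by (simp add: eval_Const.hom_mult pd_mult)
  also have "\<dots> = (\<Sum>k<m. ?e (pd k f) * pd j (xs k) * ?e g) + (\<Sum>k<m. ?e f * (?e (pd k g) * pd j (xs k)))"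
    unfolding mult.IH sum_distrib_left sum_distrib_right ..
  also have "\<dots> = (\<Sum>k<m. ?e (pd k (f * g)) * pd j (xs k))"
    unfolding sum.distrib[symmetric]
    by (rule sum.cong) (simp_all add: pd_mult eval_Const.hom_add eval_Const.hom_mult algebra_simps)
  finally show ?case .
qed

definition monom_degree :: "(nat \<Rightarrow>\<^sub>0 nat) \<Rightarrow> nat" where
  "monom_degree a = (\<Sum>i\<in>Poly_Mapping.keys a. Poly_Mapping.lookup a i)"

definition total_degree :: "mpoly \<Rightarrow> nat" where
  "total_degree P = Max (insert 0 (monom_degree ` Poly_Mapping.keys P))"

lemma monom_degree_add_var_exp: "monom_degree (a + var_exp k) = monom_degree a + 1"
proof -
  let ?S = "insert k (Poly_Mapping.keys a)"
  have superset: "monom_degree b = (\<Sum>i\<in>?S. Poly_Mapping.lookup b i)"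
    if "Poly_Mapping.keys b \<subseteq> ?S" for b
    unfolding monom_degree_def using that by (intro sum.mono_neutral_left) (auto simp: in_keys_iff)
  have "Poly_Mapping.keys (a + var_exp k) \<subseteq> ?S" using keys_add[of a "var_exp k"] by auto
  then have "monom_degree (a + var_exp k) = (\<Sum>i\<in>?S. Poly_Mapping.lookup a i + (1 when k = i))"
    by (simp add: superset lookup_add lookup_single)
  then show ?thesis using superset[OF subset_insertI] by (simp add: sum.distrib when_def)
qed

lemma lookup_pd: "Poly_Mapping.lookup (pd k P) b =
   of_nat (Poly_Mapping.lookup b k + 1) * Poly_Mapping.lookup P (b + var_exp k)"
proof -
  have cancel: "b + var_exp k - var_exp k = b"
    by (rule poly_mapping_eqI) (auto simp: lookup_add lookup_minus lookup_single when_def)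
  have minus: "m = b + var_exp k" if "m - var_exp k = b" "Poly_Mapping.lookup m k \<noteq> 0" for m
    using that by (auto intro!: poly_mapping_eqI simp: lookup_add lookup_minus lookup_single when_def)
  have "Poly_Mapping.lookup (pd k P) b = (\<Sum>m\<in>Poly_Mapping.keys P.
      (of_nat (Poly_Mapping.lookup m k) * Poly_Mapping.lookup P m when m - var_exp k = b))"
    unfolding pd_def lookup_sum lookup_single ..
  also have "\<dots> = (\<Sum>m\<in>Poly_Mapping.keys P. if m = b + var_exp k then
      of_nat (Poly_Mapping.lookup b k + 1) * Poly_Mapping.lookup P (b + var_exp k) else 0)"
  proof (rule sum.cong)
    fix m
    show "(of_nat (Poly_Mapping.lookup m k) * Poly_Mapping.lookup P m when m - var_exp k = b) =
      (if m = b + var_exp k then of_nat (Poly_Mapping.lookup b k + 1) * Poly_Mapping.lookup P (b + var_exp k) else 0)"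
    proof (cases "m = b + var_exp k")
      case False then show ?thesis using minus[of m] by (auto simp: when_def)
    qed (simp add: cancel lookup_add)
  qed simp
  also have "\<dots> = of_nat (Poly_Mapping.lookup b k + 1) * Poly_Mapping.lookup P (b + var_exp k)"
    by (simp add: in_keys_iff)
  finally show ?thesis .
qed

lemma total_degree_pd_less:
  assumes "pd k P \<noteq> 0"
  shows "total_degree (pd k P) < total_degree P"
proof -
  have less: "monom_degree b < total_degree P" if "b \<in> Poly_Mapping.keys (pd k P)" for b
  proof -
    have "b + var_exp k \<in> Poly_Mapping.keys P"
      using that by (auto simp: in_keys_iff lookup_pd)
    then have "monom_degree (b + var_exp k) \<le> total_degree P"
      unfolding total_degree_def by (intro Max_ge) auto
    then show ?thesis unfolding monom_degree_add_var_exp by simp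
  qed
  obtain b where "b \<in> Poly_Mapping.keys (pd k P)" using assms by (metis all_not_in_conv keys_eq_empty)
  then have "0 < total_degree P" using less by fastforce
  then show ?thesis unfolding total_degree_def[of "pd k P"]
    by (subst Max_less_iff) (use less in auto)
qed

lemma eq_Const_if_pd_eq_0:
  assumes "in_A m P" "\<forall>k<m. pd k P = 0"
  shows "P = Const (Poly_Mapping.lookup P 0)"
proof -
  have "a = 0" if a: "a \<in> Poly_Mapping.keys P" for a
  proof (rule ccontr)
    assume "a \<noteq> 0"
    then obtain k where k: "k \<in> Poly_Mapping.keys a" by (metis all_not_in_conv keys_eq_empty)
    then have "k < m" using assms(1) a unfolding in_A_def by auto
    have "a - var_exp k + var_exp k = a"
      using k by (intro poly_mapping_eqI) (auto simp: lookup_add lookup_minus lookup_single when_def in_keys_iff)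
    then have "Poly_Mapping.lookup (pd k P) (a - var_exp k) \<noteq> 0"
      using a by (simp add: lookup_pd in_keys_iff del: of_nat_Suc)
    then show False using assms(2) \<open>k < m\<close> by simp
  qed
  then show ?thesis
    by (intro poly_mapping_eqI) (auto simp: Const_def lookup_single when_def in_keys_iff)
qed

lemma alg_dependent_obtains_gradient_relation:
  assumes "alg_dependent Const m g"
  obtains k0 c where "k0 < m" "c k0 \<noteq> 0" "\<And>j. (\<Sum>k<m. c k * pd j (g k)) = 0"
proof -
  let ?ev = "eval_gen Const g"
  let ?rel = "\<lambda>Q. Q \<noteq> 0 \<and> in_A m Q \<and> ?ev Q = 0"
  obtain Q where Q: "?rel Q" and min: "\<And>Q'. ?rel Q' \<Longrightarrow> total_degree Q \<le> total_degree Q'"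
    using assms ex_has_least_nat[of ?rel _ total_degree] unfolding alg_dependent_def by metis
  have "\<exists>k<m. pd k Q \<noteq> 0"
  proof (rule ccontr)
    assume "\<not> ?thesis"
    then have "Q = Const (Poly_Mapping.lookup Q 0)" using eq_Const_if_pd_eq_0 Q by blast
    moreover have "?ev (Const (Poly_Mapping.lookup Q 0)) = Const (Poly_Mapping.lookup Q 0)"
      by (rule eval_gen_Const[OF Const_hom])
    ultimately show False using Q Const_inject[of _ 0] by (metis Const.hom_zero)
  qed
  then obtain k0 where k0: "k0 < m" "pd k0 Q \<noteq> 0" by blast
  have "?ev (pd k0 Q) \<noteq> 0"
    \<comment> \<open>otherwise \<partial>Q/\<partial>y_k0 would be a relation of smaller degree\<close>
    using min[of "pd k0 Q"] total_degree_pd_less[OF k0(2)] k0 Q in_A_pd by fastforce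
  moreover have "(\<Sum>k<m. ?ev (pd k Q) * pd j (g k)) = 0" for j
    using pd_eval_gen_Const[of m Q j g] Q by simp
  ultimately show thesis using that[of k0 "\<lambda>k. ?ev (pd k Q)"] k0(1) by blast
qed

lemma det_border_mat_eq_0_if_rows_dependent:
  fixes G :: "'a::idom mat"
  assumes G: "G \<in> carrier_mat m n" and nm: "n = m + 2" and k0: "k0 < m" "c k0 \<noteq> 0"
    and rel: "\<And>j. j < n \<Longrightarrow> (\<Sum>k<m. c k * G $$ (k, j)) = 0"
  shows "det (border_mat n G a b) = 0"
proof -
  define M where "M = border_mat n G a b"
  have M: "M \<in> carrier_mat n n" unfolding M_def by (rule border_mat_carrier)
  define v where "v = vec n (\<lambda>r. if r < 2 then 0 else c (r - 2))"
  have v: "v \<in> carrier_vec n" "v \<noteq> 0\<^sub>v n"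
    using k0 nm unfolding v_def by (auto simp: vec_eq_iff intro!: exI[of _ "k0 + 2"])
  have "transpose_mat M *\<^sub>v v = 0\<^sub>v n"
  proof (rule eq_vecI)
    fix j assume "j < dim_vec (0\<^sub>v n)"
    then have j: "j < n" by simp
    have "(\<Sum>r<Suc (Suc m). M $$ (r, j) * v $ r) = (\<Sum>k<m. M $$ (k + 2, j) * v $ (k + 2))"
      unfolding sum.lessThan_Suc_shift using nm by (simp add: v_def)
    also have "\<dots> = (\<Sum>k<m. c k * G $$ (k, j))"
      using j nm by (intro sum.cong) (auto simp: M_def border_mat_def v_def)
    finally show "(transpose_mat M *\<^sub>v v) $ j = 0\<^sub>v n $ j"
      using j M v rel[OF j] nm by (simp add: scalar_prod_def atLeast0LessThan)
  qed (use M in simp)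
  then have "det (transpose_mat M) = 0"
    using det_0_iff_vec_prod_zero[of "transpose_mat M" n] M v by auto
  then show ?thesis using det_transpose[OF M] unfolding M_def by simp
qed

definition jacobian_mat :: "nat \<Rightarrow> nat \<Rightarrow> (nat \<Rightarrow> mpoly) \<Rightarrow> mpoly mat" where
  "jacobian_mat m n g = mat m n (\<lambda>(k, j). pd j (g k))"

lemma det_border_jacobian_eq_0_if_alg_dependent:
  assumes "alg_dependent Const m g" "n = m + 2"
  shows "det (border_mat n (jacobian_mat m n g) a b) = 0"
proof -
  obtain k0 c where "k0 < m" "c k0 \<noteq> 0" "\<And>j. (\<Sum>k<m. c k * pd j (g k)) = 0"
    using alg_dependent_obtains_gradient_relation[OF assms(1)] by blast
  then show ?thesis
    by (intro det_border_mat_eq_0_if_rows_dependent[of _ m n k0 c])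
      (auto simp: assms(2) jacobian_mat_def intro: trans[OF sum.cong])
qed

lemma map_mat_border_mat:
  assumes "G \<in> carrier_mat m n" "n = m + 2"
  shows "map_mat h (border_mat n G a b) = border_mat n (map_mat h G) (h \<circ> a) (h \<circ> b)"
  using assms by (intro eq_matI) (auto simp: border_mat_def)

section \<open>The bracket as a polynomial determinant\<close>

lemma det_scale_rows:
  fixes M :: "'a::comm_ring_1 mat"
  assumes M: "M \<in> carrier_mat n n"
  shows "det (mat n n (\<lambda>(r, c). a r * M $$ (r, c))) = (\<Prod>r<n. a r) * det M"
proof -
  have "det (mat n n (\<lambda>(r, c). a r * M $$ (r, c))) =
      (\<Sum>q | q permutes {0..<n}. signof q * (\<Prod>r = 0..<n. a r * M $$ (r, q r)))"
    by (subst det_def') (auto intro!: sum.cong prod.cong simp: permutes_in_image)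
  also have "\<dots> = (\<Prod>r<n. a r) * det M"
    unfolding det_def'[OF M] sum_distrib_left prod.distrib atLeast0LessThan by (simp add: ac_simps)
  finally show ?thesis .
qed

definition bracket_rows :: "nat \<Rightarrow> (nat \<Rightarrow> mpoly) \<Rightarrow> (nat \<Rightarrow> mpoly) \<Rightarrow> mpoly mat" where
  "bracket_rows n s t = mat (n - 2) n (\<lambda>(k, j). t k * pd j (s k) - s k * pd j (t k))"

interpretation to_fract: inj_comm_ring_hom "to_fract :: mpoly \<Rightarrow> mpoly fract"
  by unfold_locales auto

lemma pbracket_eq_det:
  assumes t: "\<forall>i<n-2. t i \<noteq> 0" and n: "2 \<le> n"
  shows "pbracket n s t f g =
    to_fract (det (border_mat n (bracket_rows n s t) (\<lambda>j. pd j f) (\<lambda>j. pd j g)))"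
proof -
  define M where "M = mat n n (\<lambda>(r, c).
        if r = 0 then to_fract (pd c f)
        else if r = 1 then to_fract (pd c g)
        else pd_frac c (s (r - 2)) (t (r - 2)))"
  define N where "N = border_mat n (bracket_rows n s t) (\<lambda>j. pd j f) (\<lambda>j. pd j g)"
  define a where "a r = (if r < 2 then 1 else to_fract (t (r - 2) ^ 2))" for r
  have M: "M \<in> carrier_mat n n" unfolding M_def by simp
  have "to_fract (N $$ (r, c)) = a r * M $$ (r, c)" if "r < n" "c < n" for r c
  proof (cases "r < 2")
    case False
    then have "t (r - 2) ^ 2 \<noteq> 0" using t that by auto
    then show ?thesis using that False
      unfolding a_def M_def N_def border_mat_def bracket_rows_def pd_frac_def
      by (simp add: to_fract_def mult_fract eq_fract)
  qed (use that in \<open>auto simp: a_def M_def N_def border_mat_def\<close>)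
  then have "map_mat to_fract N = mat n n (\<lambda>(r, c). a r * M $$ (r, c))"
    unfolding N_def by (intro eq_matI) (auto simp: border_mat_def)
  then have "to_fract (det N) = (\<Prod>r<n. a r) * det M"
    using to_fract.hom_det[of N] det_scale_rows[OF M] by simp
  moreover have "(\<Prod>r<n. a r) = to_fract ((\<Prod>i<n-2. t i) ^ 2)"
  proof -
    obtain m where m: "n = Suc (Suc m)" using n by (metis add_2_eq_Suc le_Suc_ex)
    show ?thesis unfolding m prod.lessThan_Suc_shift
      by (simp add: a_def to_fract.hom_prod to_fract.hom_power prod_power_distrib)
  qed
  ultimately show ?thesis unfolding pbracket_def M_def N_def by simp
qed

definition level_poly :: "(nat \<Rightarrow> complex) \<Rightarrow> mpoly \<Rightarrow> mpoly \<Rightarrow> mpoly" where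
  "level_poly p s t = Const (evalp p t) * s - Const (evalp p s) * t"

definition jacobian_at :: "nat \<Rightarrow> nat \<Rightarrow> (nat \<Rightarrow> complex) \<Rightarrow> (nat \<Rightarrow> mpoly) \<Rightarrow> complex mat" where
  "jacobian_at m n p g = mat m n (\<lambda>(k, j). evalp p (pd j (g k)))"

lemma map_mat_evalp_jacobian_mat: "map_mat (evalp p) (jacobian_mat m n g) = jacobian_at m n p g"
  unfolding jacobian_mat_def jacobian_at_def by (intro eq_matI) auto

lemma map_mat_evalp_bracket_rows:
  "map_mat (evalp p) (bracket_rows n s t) = jacobian_at (n - 2) n p (\<lambda>k. level_poly p (s k) (t k))"
  unfolding bracket_rows_def jacobian_at_def level_poly_def
  by (intro eq_matI) (auto simp: pd.hom_minus pd_Const_mult evalp.hom_minus evalp.hom_mult)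

lemma evalp_det_border_bracket_rows:
  assumes "2 \<le> n"
  shows "evalp p (det (border_mat n (bracket_rows n s t) (\<lambda>j. pd j f) (\<lambda>j. pd j g))) =
    det (border_mat n (jacobian_at (n - 2) n p (\<lambda>k. level_poly p (s k) (t k)))
      (\<lambda>j. evalp p (pd j f)) (\<lambda>j. evalp p (pd j g)))"
proof -
  have "map_mat (evalp p) (border_mat n (bracket_rows n s t) (\<lambda>j. pd j f) (\<lambda>j. pd j g)) =
      border_mat n (map_mat (evalp p) (bracket_rows n s t)) (\<lambda>j. evalp p (pd j f)) (\<lambda>j. evalp p (pd j g))"
    using assms by (subst map_mat_border_mat[of _ "n - 2"]) (auto simp: bracket_rows_def o_def)
  then show ?thesis
    unfolding evalp.hom_det[symmetric] map_mat_evalp_bracket_rows by simp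
qed

section \<open>Poisson ideals M_p\<close>

lemma poisson_Mp_iff_rank_less:
  fixes p :: "nat \<Rightarrow> complex"
  assumes n: "2 \<le> n" and st: "\<forall>i<n-2. in_A n (s i) \<and> in_A n (t i)" and t: "\<forall>i<n-2. t i \<noteq> 0"
  defines "J \<equiv> jacobian_at (n - 2) n p (\<lambda>k. level_poly p (s k) (t k))"
  shows "poisson_ideal n s t (Mp n p) \<longleftrightarrow> vec_space.rank (n - 2) J < n - 2"
proof -
  have J: "J \<in> carrier_mat (n - 2) n" and nm: "n = n - 2 + 2"
    using n unfolding J_def jacobian_at_def by auto
  let ?B = "\<lambda>f g. border_mat n (bracket_rows n s t) (\<lambda>j. pd j f) (\<lambda>j. pd j g)"
  have evalp_B: "evalp p (det (?B f g)) = det (border_mat n J (\<lambda>j. evalp p (pd j f)) (\<lambda>j. evalp p (pd j g)))"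
    for f g unfolding J_def using evalp_det_border_bracket_rows[OF n] .
  have bracket: "pbracket n s t f g = to_fract (det (?B f g))" for f g
    using pbracket_eq_det[OF t n] .
  show ?thesis
  proof
    assume poisson: "poisson_ideal n s t (Mp n p)"
    have "det (border_mat n J (\<lambda>c. of_bool (c = i)) (\<lambda>c. of_bool (c = j))) = 0" if "i < n" "j < n" for i j
    proof -
      have "Var i - Const (p i) \<in> Mp n p" "in_A n (Var j)"
        using that by (simp_all add: Var_minus_Const_in_Mp in_A_Var)
      then obtain h where "h \<in> Mp n p" "pbracket n s t (Var i - Const (p i)) (Var j) = to_fract h"
        using poisson unfolding poisson_ideal_def by blast
      then have "det (?B (Var i - Const (p i)) (Var j)) \<in> Mp n p" using bracket by simp
      then have "evalp p (det (?B (Var i - Const (p i)) (Var j))) = 0"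
        using Mp_eq_kernel Mp_in_A by blast
      moreover have "(\<lambda>c. evalp p (pd c (Var i - Const (p i)))) = (\<lambda>c. of_bool (c = i))"
        "(\<lambda>c. evalp p (pd c (Var j))) = (\<lambda>c. of_bool (c = j))"
        by (auto simp: pd.hom_minus pd_Var)
      ultimately show ?thesis unfolding evalp_B by simp
    qed
    then show "vec_space.rank (n - 2) J < n - 2"
      using rank_less_iff_unit_border_dets_zero[OF J nm] by blast
  next
    assume rank: "vec_space.rank (n - 2) J < n - 2"
    have "det (?B f g) \<in> Mp n p" if f: "f \<in> Mp n p" and g: "in_A n g" for f g
    proof (subst Mp_eq_kernel)
      show "in_A n (det (?B f g))"
        using Mp_in_A[OF f] g st
        by (intro in_A_det) (auto simp: border_mat_def bracket_rows_def intro!: in_A_pd in_A_diff in_A_mult)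
      show "evalp p (det (?B f g)) = 0"
        using rank_full_if_border_det_nonzero[OF J nm] rank evalp_B by fastforce
    qed
    then show "poisson_ideal n s t (Mp n p)"
      unfolding poisson_ideal_def using Mp_ideal bracket by blast
  qed
qed

lemma rank_less_if_zero_row:
  fixes J :: "'a::field mat"
  assumes J: "J \<in> carrier_mat m n" and nm: "n = m + 2" and k: "k < m" "\<And>j. j < n \<Longrightarrow> J $$ (k, j) = 0"
  shows "vec_space.rank m J < m"
  unfolding rank_less_iff_unit_border_dets_zero[OF J nm]
  using k by (auto intro!: det_border_mat_eq_0_if_rows_dependent[OF J nm k(1), of "\<lambda>i. of_bool (i = k)"])

lemma rank_less_if_alg_dependent:
  assumes "alg_dependent Const m g" and nm: "n = m + 2"
  shows "vec_space.rank m (jacobian_at m n p g) < m"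
proof -
  have J: "jacobian_mat m n g \<in> carrier_mat m n" by (simp add: jacobian_mat_def)
  have "det (border_mat n (jacobian_at m n p g) (\<lambda>c. of_bool (c = i)) (\<lambda>c. of_bool (c = j))) = 0" for i j
    using det_border_jacobian_eq_0_if_alg_dependent[OF assms, of "\<lambda>c. Const (of_bool (c = i))"
        "\<lambda>c. Const (of_bool (c = j))"]
      evalp.hom_det[of p "border_mat n (jacobian_mat m n g) (\<lambda>c. Const (of_bool (c = i)))
        (\<lambda>c. Const (of_bool (c = j)))"]
    unfolding map_mat_border_mat[OF J nm] map_mat_evalp_jacobian_mat by (simp add: o_def)
  moreover have "jacobian_at m n p g \<in> carrier_mat m n" by (simp add: jacobian_at_def)
  ultimately show ?thesis using rank_less_iff_unit_border_dets_zero[OF _ nm] by blast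
qed

theorem lemma3p2:
  fixes n :: nat and s t :: "nat \<Rightarrow> mpoly" and p :: "nat \<Rightarrow> complex"
  assumes "n \<ge> 3"
    and "\<forall>i<n-2. in_A n (s i) \<and> in_A n (t i)"
    and "\<forall>i<n-2. t i \<noteq> 0"
    and "\<forall>i<n-2. coprime_p (s i) (t i)"
    and "\<not> alg_dependent (\<lambda>c. to_fract (Const c)) (n-2) (\<lambda>i. Fract (s i) (t i))"
  shows "poisson_ideal n s t (Mp n p) \<longleftrightarrow>
    (let g = (\<lambda>i. Const (evalp p (t i)) * s i - Const (evalp p (s i)) * t i) in
      (\<exists>i<n-2. evalp p (s i) = 0 \<and> evalp p (t i) = 0)
      \<or> alg_dependent Const (n-2) g
      \<or> vec_space.rank (n-2) (mat (n-2) n (\<lambda>(i, j). evalp p (pd j (g i)))) < n-2)"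
proof -
  define g where "g i = level_poly p (s i) (t i)" for i
  define J where "J = jacobian_at (n - 2) n p g"
  have nm: "n = n - 2 + 2" using assms(1) by simp
  have "\<exists>i<n-2. evalp p (s i) = 0 \<and> evalp p (t i) = 0 \<Longrightarrow> vec_space.rank (n - 2) J < n - 2"
    using nm by (auto intro!: rank_less_if_zero_row simp: J_def jacobian_at_def g_def level_poly_def)
  moreover have "alg_dependent Const (n - 2) g \<Longrightarrow> vec_space.rank (n - 2) J < n - 2"
    unfolding J_def by (rule rank_less_if_alg_dependent[OF _ nm])
  moreover have "poisson_ideal n s t (Mp n p) \<longleftrightarrow> vec_space.rank (n - 2) J < n - 2"
    unfolding J_def g_def using assms(1-3) by (intro poisson_Mp_iff_rank_less) auto
  ultimately show ?thesis
    unfolding Let_def J_def jacobian_at_def g_def level_poly_def by blast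
qed

end
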